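(* Let $n\geq 1$. Choose edges of the complete bipartite graph $K_{n,n}$ one at a time in a uniformly random order (without repetition), stopping as soon as every vertex has degree at least one; call the resulting random graph $G_\omega$. Then the expected number of perfect matchings contained in $G_\omega$ is $$n!\left(\frac{2}{\binom{2n-1}{n}} - \frac{1}{\binom{3n-2}{n}}\right).$$
   Context: Precisely: a uniformly random ordering $(e_1,\dots,e_{n^2})$ of the edges of $K_{n,n}$ is chosen, $k$ is the least index such that the graph on all $2n$ vertices with edges $e_1,\dots,e_k$ has no isolated vertex, and $G_\omega$ is that graph. A perfect matching is a set of edges such that every vertex lies in exactly one of them. *)

theory Defs
  imports "HOL-Probability.Probability" "HOL-Combinatorics.Multiset_Permutations"
begin

text \<open>Vertices of K_{n,n}: left vertices i < n and right vertices j < n.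
  An edge is a pair (i, j) joining left vertex i to right vertex j.\<close>

definition Knn_edges :: "nat \<Rightarrow> (nat \<times> nat) set" where
  "Knn_edges n = {..<n} \<times> {..<n}"

definition no_isolated :: "nat \<Rightarrow> (nat \<times> nat) set \<Rightarrow> bool" where
  "no_isolated n F \<longleftrightarrow> (\<forall>i<n. \<exists>j. (i, j) \<in> F) \<and> (\<forall>j<n. \<exists>i. (i, j) \<in> F)"

definition perfect_matching :: "nat \<Rightarrow> (nat \<times> nat) set \<Rightarrow> bool" where
  "perfect_matching n M \<longleftrightarrow> M \<subseteq> Knn_edges n \<and>
     (\<forall>i<n. \<exists>!j. (i, j) \<in> M) \<and> (\<forall>j<n. \<exists>!i. (i, j) \<in> M)"

definition num_pm :: "nat \<Rightarrow> (nat \<times> nat) set \<Rightarrow> nat" where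
  "num_pm n F = card {M. M \<subseteq> F \<and> perfect_matching n M}"

definition stop_index :: "nat \<Rightarrow> (nat \<times> nat) list \<Rightarrow> nat" where
  "stop_index n xs = (LEAST k. no_isolated n (set (take k xs)))"

definition G_omega :: "nat \<Rightarrow> (nat \<times> nat) list \<Rightarrow> (nat \<times> nat) set" where
  "G_omega n xs = set (take (stop_index n xs) xs)"

end

theory Submission
  imports Defs
begin

text \<open>By linearity of expectation it suffices to show that every perfect matching M lies in
  G_omega with probability 2 / C(2n-1, n) - 1 / C(3n-2, n), as there are n! of them.
  The process stops at the edge e that first covers the last isolated vertex v, so
  M \<subseteq> G_omega iff e \<in> M, the other edges of M all come before e, and the other
  edges at v all come after e. For fixed e and v (one of the two endpoints of e) this only
  constrains the relative order of the 2n - 1 edges of M and the star of v, and the restriction of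
  a uniform random ordering to a subset is again uniform; so the event has probability
  (n-1)! (n-1)! / (2n-1)! = 1 / (n C(2n-1, n)). Inclusion-exclusion over the two endpoints (the
  intersection involves 3n - 2 edges) and summing over the n disjoint choices of e gives the
  claim.\<close>

definition precedes :: "'a set \<Rightarrow> 'a set \<Rightarrow> 'a list \<Rightarrow> bool" where
  "precedes S T xs \<longleftrightarrow> (\<exists>k. S \<subseteq> set (take k xs) \<and> T \<inter> set (take k xs) = {})"

lemma precedes_empty [simp]: "precedes {} T xs"
  unfolding precedes_def by (rule exI[of _ 0]) simp

lemma precedes_Cons:
  "precedes S T (x # xs) \<longleftrightarrow> S = {} \<or> (x \<notin> T \<and> precedes (S - {x}) T xs)"
proof
  assume "precedes S T (x # xs)"
  then obtain k where k: "S \<subseteq> set (take k (x # xs))" "T \<inter> set (take k (x # xs)) = {}"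
    unfolding precedes_def by blast
  show "S = {} \<or> (x \<notin> T \<and> precedes (S - {x}) T xs)"
  proof (cases k)
    case 0
    then show ?thesis using k by simp
  next
    case (Suc k')
    then show ?thesis using k unfolding precedes_def by (intro disjI2 conjI exI[of _ k']) auto
  qed
next
  assume "S = {} \<or> (x \<notin> T \<and> precedes (S - {x}) T xs)"
  then show "precedes S T (x # xs)"
  proof
    assume "x \<notin> T \<and> precedes (S - {x}) T xs"
    then obtain k where "S - {x} \<subseteq> set (take k xs)" "T \<inter> set (take k xs) = {}" "x \<notin> T"
      unfolding precedes_def by blast
    then show ?thesis unfolding precedes_def by (intro exI[of _ "Suc k"]) auto
  qed simp
qed

lemma precedes_filter:
  assumes "S \<union> T \<subseteq> {x. P x}"
  shows "precedes S T (filter P xs) \<longleftrightarrow> precedes S T xs"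
  using assms
proof (induction xs arbitrary: S)
  case (Cons x xs)
  show ?case
  proof (cases "P x")
    case True
    then show ?thesis using Cons.prems Cons.IH[of "S - {x}"] by (auto simp: precedes_Cons)
  next
    case False
    then have "x \<notin> S" "x \<notin> T" using Cons.prems by auto
    then show ?thesis using Cons by (auto simp: precedes_Cons)
  qed
qed simp

lemma precedes_mono: "precedes S T xs \<Longrightarrow> S' \<subseteq> S \<Longrightarrow> T' \<subseteq> T \<Longrightarrow> precedes S' T' xs"
  unfolding precedes_def by blast

lemma precedes_take:
  assumes "precedes S T xs" "T \<inter> set (take k xs) \<noteq> {}"
  shows "S \<subseteq> set (take k xs)"
proof -
  obtain k' where k': "S \<subseteq> set (take k' xs)" "T \<inter> set (take k' xs) = {}"
    using assms(1) unfolding precedes_def by blast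
  then have "\<not> k \<le> k'" using assms(2) set_take_subset_set_take[of k k' xs] by blast
  then show ?thesis using k'(1) set_take_subset_set_take[of k' k xs] by simp
qed

lemma precedes_asym: "precedes {a} {b} xs \<Longrightarrow> \<not> precedes {b} {a} xs"
proof
  assume ab: "precedes {a} {b} xs" and "precedes {b} {a} xs"
  then obtain k where "b \<in> set (take k xs)" "a \<notin> set (take k xs)"
    unfolding precedes_def by blast
  then show False using precedes_take[OF ab, of k] by blast
qed

lemma precedes_Un: "precedes S T xs \<and> precedes S T' xs \<longleftrightarrow> precedes S (T \<union> T') xs"
proof
  assume "precedes S T xs \<and> precedes S T' xs"
  then obtain k k' where k: "S \<subseteq> set (take k xs)" "T \<inter> set (take k xs) = {}"
    and k': "S \<subseteq> set (take k' xs)" "T' \<inter> set (take k' xs) = {}"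
    unfolding precedes_def by blast
  have "S \<subseteq> set (take (min k k') xs)"
    using k(1) k'(1) by (cases "k \<le> k'") (simp_all add: min_def)
  moreover have "set (take (min k k') xs) \<subseteq> set (take k xs) \<inter> set (take k' xs)"
    by (simp add: set_take_subset_set_take)
  ultimately show "precedes S (T \<union> T') xs"
    unfolding precedes_def using k(2) k'(2) by blast
qed (blast intro: precedes_mono)

lemma precedes_iff_take_eq:
  assumes "set xs \<subseteq> S \<union> T" "S \<inter> T = {}"
  shows "precedes S T xs \<longleftrightarrow> (\<exists>k. set (take k xs) = S)"
proof -
  have "S \<subseteq> set (take k xs) \<and> T \<inter> set (take k xs) = {} \<longleftrightarrow> set (take k xs) = S" for k
    using assms set_take_subset[of k xs] by blast
  then show ?thesis unfolding precedes_def by simp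
qed

lemma filter_in_permutations_of_set:
  "xs \<in> permutations_of_set A \<Longrightarrow> filter P xs \<in> permutations_of_set {x \<in> A. P x}"
  by (auto simp: permutations_of_set_def)

lemma card_permutations_of_set_split_hd:
  assumes "finite A" "A \<noteq> {}"
  shows "card {xs \<in> permutations_of_set A. Q xs} =
         (\<Sum>x\<in>A. card {ys \<in> permutations_of_set (A - {x}). Q (x # ys)})"
proof -
  have "{xs \<in> permutations_of_set A. Q xs} =
        (\<Union>x\<in>A. (\<lambda>ys. x # ys) ` {ys \<in> permutations_of_set (A - {x}). Q (x # ys)})"
    using permutations_of_set_nonempty[OF assms(2)] by auto
  also have "card \<dots> = (\<Sum>x\<in>A. card ((\<lambda>ys. x # ys) ` {ys \<in> permutations_of_set (A - {x}). Q (x # ys)}))"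
    by (rule card_UN_disjoint) (auto simp: assms)
  also have "\<dots> = (\<Sum>x\<in>A. card {ys \<in> permutations_of_set (A - {x}). Q (x # ys)})"
    by (intro sum.cong refl card_image) (auto simp: inj_on_def)
  finally show ?thesis .
qed

lemma card_permutations_of_set_filter_eq:
  assumes "finite A" "ys \<in> permutations_of_set {x \<in> A. P x}"
  shows "card {xs \<in> permutations_of_set A. filter P xs = ys} * fact (length ys) = fact (card A)"
  using assms
proof (induction "card A" arbitrary: A ys)
  case 0
  then have "A = {}" "ys = []" by (auto simp: permutations_of_set_def)
  then have "{xs \<in> permutations_of_set A. filter P xs = ys} = {[]}" by auto
  then show ?case using \<open>A = {}\<close> \<open>ys = []\<close> by simp
next
  case (Suc m)
  define L where "L = length ys"
  define fibre where "fibre x = card {zs \<in> permutations_of_set (A - {x}). filter P (x # zs) = ys}" for x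
  have A: "finite A" "A \<noteq> {}" "card A = Suc m" using Suc by auto
  have ys: "set ys = {x \<in> A. P x}" "distinct ys" using Suc.prems(2) by (auto dest: permutations_of_setD)
  have fibre: "fibre x * fact L = (if \<not> P x then fact m else if x = hd ys then L * fact m else 0)"
    if x: "x \<in> A" for x
  proof (cases "P x")
    case False
    then have "{y \<in> A - {x}. P y} = {y \<in> A. P y}" by auto
    then show ?thesis
      using Suc.hyps(1)[of "A - {x}" ys] Suc.prems False x A unfolding fibre_def L_def by simp
  next
    case True
    then obtain y ys' where ys': "ys = y # ys'" using ys x by (cases ys) auto
    then have "y \<in> A" using ys by auto
    then have "ys' \<in> permutations_of_set {z \<in> A - {y}. P z}" "card (A - {y}) = m"
      using ys ys' A by (auto simp: permutations_of_set_def)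
    moreover have "fibre x = (if x = y then card {zs \<in> permutations_of_set (A - {x}). filter P zs = ys'} else 0)"
      unfolding fibre_def using True ys' by simp
    ultimately show ?thesis
      using Suc.hyps(1)[of "A - {y}" ys'] A(1) True ys' unfolding L_def by (simp add: algebra_simps)
  qed
  have "card {xs \<in> permutations_of_set A. filter P xs = ys} * fact L = (\<Sum>x\<in>A. fibre x * fact L)"
    unfolding fibre_def sum_distrib_right[symmetric] card_permutations_of_set_split_hd[OF A(1,2)] ..
  also have "\<dots> = card {x \<in> A. \<not> P x} * fact m + (\<Sum>x\<in>{x \<in> A. P x}. if x = hd ys then L * fact m else 0)"
    using A(1) fibre by (simp add: sum.If_cases Int_def conj_commute)
  also have "\<dots> = (card {x \<in> A. \<not> P x} + card {x \<in> A. P x}) * fact m"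
    using ys A(1) distinct_card[OF ys(2)] unfolding L_def by (cases ys) (auto simp: algebra_simps)
  also have "card {x \<in> A. \<not> P x} + card {x \<in> A. P x} = card A"
    using A(1) by (subst card_Un_disjoint[symmetric]) (auto intro: arg_cong[where f = card])
  finally show ?case using A(3) unfolding L_def by simp
qed

lemma card_permutations_of_set_filter_in:
  assumes "finite A" "L \<subseteq> permutations_of_set {x \<in> A. P x}"
  shows "card {xs \<in> permutations_of_set A. filter P xs \<in> L} * fact (card {x \<in> A. P x})
           = fact (card A) * card L"
proof -
  have fin: "finite L" using assms(2) by (rule finite_subset) simp
  have "{xs \<in> permutations_of_set A. filter P xs \<in> L}
          = (\<Union>ys\<in>L. {xs \<in> permutations_of_set A. filter P xs = ys})" by blast
  also have "card \<dots> = (\<Sum>ys\<in>L. card {xs \<in> permutations_of_set A. filter P xs = ys})"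
    using fin by (intro card_UN_disjoint) auto
  finally have "card {xs \<in> permutations_of_set A. filter P xs \<in> L}
                  = (\<Sum>ys\<in>L. card {xs \<in> permutations_of_set A. filter P xs = ys})" .
  moreover have "card {xs \<in> permutations_of_set A. filter P xs = ys} * fact (card {x \<in> A. P x})
                   = fact (card A)" if "ys \<in> L" for ys
  proof -
    have ys: "ys \<in> permutations_of_set {x \<in> A. P x}" using assms(2) that ..
    show ?thesis
      using card_permutations_of_set_filter_eq[OF assms(1) ys] length_finite_permutations_of_set[OF ys]
      by simp
  qed
  ultimately show ?thesis by (simp add: sum_distrib_right)
qed

definition ordered_blocks :: "'a set \<Rightarrow> 'a \<Rightarrow> 'a set \<Rightarrow> 'a list \<Rightarrow> bool" where
  "ordered_blocks S e X xs \<longleftrightarrow> precedes S (insert e X) xs \<and> precedes (insert e S) X xs"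

lemma ordered_blocks_Un:
  "ordered_blocks S e X xs \<and> ordered_blocks S e Y xs \<longleftrightarrow> ordered_blocks S e (X \<union> Y) xs"
  unfolding ordered_blocks_def using precedes_Un[of S "insert e X" xs "insert e Y"]
    precedes_Un[of "insert e S" X xs Y] by auto

lemma ordered_blocks_take:
  assumes "ordered_blocks S e X xs" "set (take k xs) \<inter> insert e X \<noteq> {}"
  shows "insert e S \<subseteq> set (take k xs)"
proof -
  have S: "precedes S (insert e X) xs" and eS: "precedes (insert e S) X xs"
    using assms(1) unfolding ordered_blocks_def by auto
  show ?thesis
  proof (cases "X \<inter> set (take k xs) = {}")
    case True
    then have "e \<in> set (take k xs)" using assms(2) by blast
    moreover have "S \<subseteq> set (take k xs)" using precedes_take[OF S] assms(2) by (simp add: Int_commute)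
    ultimately show ?thesis by simp
  next
    case False
    then show ?thesis using precedes_take[OF eS] by simp
  qed
qed

lemma ordered_blocks_nth:
  assumes "k < length xs" "xs ! k = e" "e \<notin> X"
    and "S \<subseteq> set (take k xs)" "set (take k xs) \<inter> insert e X = {}"
  shows "ordered_blocks S e X xs"
proof -
  have "set (take (Suc k) xs) = insert e (set (take k xs))"
    using assms(1,2) by (simp add: take_Suc_conv_app_nth)
  then show ?thesis
    unfolding ordered_blocks_def precedes_def using assms(3-5)
    by (intro conjI exI[of _ k] exI[of _ "Suc k"]) auto
qed

lemma ordered_blocks_imp_precedes: "ordered_blocks S e X xs \<Longrightarrow> f \<in> S \<Longrightarrow> precedes {f} {e} xs"
  unfolding ordered_blocks_def using precedes_mono[of S "insert e X" xs "{f}" "{e}"] by blast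

lemma ordered_blocks_permutation_iff:
  assumes "e \<notin> S" "e \<notin> X" "S \<inter> X = {}"
  shows "ys \<in> permutations_of_set (insert e (S \<union> X)) \<and> ordered_blocks S e X ys \<longleftrightarrow>
         (\<exists>us\<in>permutations_of_set S. \<exists>vs\<in>permutations_of_set X. ys = us @ e # vs)"
proof
  assume ys: "ys \<in> permutations_of_set (insert e (S \<union> X)) \<and> ordered_blocks S e X ys"
  then have set_ys: "set ys = insert e (S \<union> X)" and dist: "distinct ys"
    by (auto dest: permutations_of_setD)
  obtain k where k: "set (take k ys) = S"
    using ys precedes_iff_take_eq[of ys S "insert e X"] assms set_ys unfolding ordered_blocks_def by auto
  obtain k' where k': "set (take k' ys) = insert e S"
    using ys precedes_iff_take_eq[of ys "insert e S" X] assms set_ys unfolding ordered_blocks_def by auto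
  have "\<not> k' \<le> k" using k k' assms(1) set_take_subset_set_take[of k' k ys] by auto
  then have Suc_k: "set (take (Suc k) ys) \<subseteq> insert e S"
    using k' set_take_subset_set_take[of "Suc k" k' ys] by simp
  have "k < length ys" using k set_ys assms(1) by (metis insertI1 linorder_not_less take_all)
  then have ys_k: "ys = take k ys @ ys ! k # drop (Suc k) ys" by (simp add: id_take_nth_drop)
  then have "distinct (take k ys @ ys ! k # drop (Suc k) ys)" using dist by metis
  then have "ys ! k \<notin> S" using k by simp
  then have "ys ! k = e"
    using Suc_k \<open>k < length ys\<close> by (auto simp: take_Suc_conv_app_nth)
  define us vs where "us = take k ys" and "vs = drop (Suc k) ys"
  have ys_eq: "ys = us @ e # vs" using ys_k \<open>ys ! k = e\<close> unfolding us_def vs_def by simp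
  then have "distinct us" "distinct vs" "set vs = X"
    using dist set_ys k assms unfolding us_def[symmetric] by auto
  then show "\<exists>us\<in>permutations_of_set S. \<exists>vs\<in>permutations_of_set X. ys = us @ e # vs"
    using ys_eq k unfolding us_def[symmetric] by blast
next
  assume "\<exists>us\<in>permutations_of_set S. \<exists>vs\<in>permutations_of_set X. ys = us @ e # vs"
  then obtain us vs where us: "set us = S" "distinct us" and vs: "set vs = X" "distinct vs"
    and ys: "ys = us @ e # vs"
    by (auto dest: permutations_of_setD)
  have "ys \<in> permutations_of_set (insert e (S \<union> X))"
    using us vs ys assms by (auto simp: permutations_of_set_def)
  moreover have "ordered_blocks S e X ys"
    using ordered_blocks_nth[of "length us" ys e X S] us vs ys assms by auto
  ultimately show "ys \<in> permutations_of_set (insert e (S \<union> X)) \<and> ordered_blocks S e X ys" ..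
qed

lemma card_ordered_blocks:
  assumes "finite A" "insert e (S \<union> X) \<subseteq> A" "e \<notin> S" "e \<notin> X" "S \<inter> X = {}"
  shows "card {xs \<in> permutations_of_set A. ordered_blocks S e X xs} * fact (card S + card X + 1)
           = fact (card A) * (fact (card S) * fact (card X))"
proof -
  define C where "C = insert e (S \<union> X)"
  define L where "L = {ys \<in> permutations_of_set C. ordered_blocks S e X ys}"
  have fin: "finite S" "finite X" using assms(1,2) by (auto intro: rev_finite_subset)
  have C: "{x \<in> A. x \<in> C} = C" using assms(2) unfolding C_def by auto
  have card_C: "card C = card S + card X + 1"
    using fin assms(3-5) unfolding C_def by (simp add: card_Un_disjoint)
  have "ordered_blocks S e X (filter (\<lambda>x. x \<in> C) xs) \<longleftrightarrow> ordered_blocks S e X xs" for xs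
    unfolding ordered_blocks_def C_def by (subst (1 2) precedes_filter) auto
  moreover have "filter (\<lambda>x. x \<in> C) xs \<in> permutations_of_set C" if "xs \<in> permutations_of_set A" for xs
    using filter_in_permutations_of_set[OF that, of "\<lambda>x. x \<in> C"] C by simp
  ultimately have events: "{xs \<in> permutations_of_set A. ordered_blocks S e X xs}
                             = {xs \<in> permutations_of_set A. filter (\<lambda>x. x \<in> C) xs \<in> L}"
    unfolding L_def by auto
  have "L = (\<lambda>(us, vs). us @ e # vs) ` (permutations_of_set S \<times> permutations_of_set X)"
    unfolding L_def C_def using ordered_blocks_permutation_iff[OF assms(3-5)] by auto
  moreover have "inj_on (\<lambda>(us, vs). us @ e # vs) (permutations_of_set S \<times> permutations_of_set X)"
    using assms(3,4) by (auto simp: inj_on_def append_Cons_eq_iff permutations_of_set_def)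
  ultimately have "card L = fact (card S) * fact (card X)"
    using fin by (simp add: card_image card_cartesian_product)
  then show ?thesis
    using card_permutations_of_set_filter_in[OF assms(1), of L "\<lambda>x. x \<in> C"] events C card_C
    unfolding L_def by simp
qed

definition perm_matching :: "nat \<Rightarrow> (nat \<Rightarrow> nat) \<Rightarrow> (nat \<times> nat) set" where
  "perm_matching n p = (\<lambda>i. (i, p i)) ` {..<n}"

lemma mem_perm_matching_iff: "(i, j) \<in> perm_matching n p \<longleftrightarrow> i < n \<and> j = p i"
  unfolding perm_matching_def by auto

lemma perfect_matching_perm_matching:
  assumes "p permutes {..<n}"
  shows "perfect_matching n (perm_matching n p)"
proof -
  have "p i < n" if "i < n" for i using permutes_in_image[OF assms] that by simp
  moreover have "\<exists>!i. i < n \<and> j = p i" if "j < n" for j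
  proof -
    have "j \<in> p ` {..<n}" using permutes_image[OF assms] that by simp
    then obtain i where "i < n" "j = p i" by auto
    then show ?thesis by (intro ex1I[of _ i]) (auto dest: injD[OF permutes_inj[OF assms]])
  qed
  ultimately show ?thesis
    unfolding perfect_matching_def Knn_edges_def by (auto simp: mem_perm_matching_iff)
qed

lemma perfect_matching_imp_perm_matching:
  assumes M: "perfect_matching n M"
  obtains p where "p permutes {..<n}" "M = perm_matching n p"
proof
  define p where "p i = (if i < n then THE j. (i, j) \<in> M else i)" for i
  have M_edges: "M \<subseteq> {..<n} \<times> {..<n}"
    and left: "\<And>i. i < n \<Longrightarrow> \<exists>!j. (i, j) \<in> M" and right: "\<And>j. j < n \<Longrightarrow> \<exists>!i. (i, j) \<in> M"
    using M unfolding perfect_matching_def Knn_edges_def by blast+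
  have mem: "(i, j) \<in> M \<longleftrightarrow> i < n \<and> j = p i" for i j
  proof
    assume ij: "(i, j) \<in> M"
    then have "i < n" using M_edges by blast
    then show "i < n \<and> j = p i" using the1_equality[OF left ij] unfolding p_def by simp
  next
    assume "i < n \<and> j = p i"
    then show "(i, j) \<in> M" using theI'[OF left] unfolding p_def by simp
  qed
  have "bij_betw p {..<n} {..<n}"
  proof (rule bij_betw_imageI)
    show "inj_on p {..<n}"
    proof (rule inj_onI)
      fix a b assume "a \<in> {..<n}" "b \<in> {..<n}" "p a = p b"
      then have "(a, p a) \<in> M" "(b, p a) \<in> M" "p a < n" using mem M_edges by auto
      then show "a = b" using right by blast
    qed
    show "p ` {..<n} = {..<n}"
    proof (intro equalityI subsetI)
      fix j assume "j \<in> {..<n}"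
      then obtain i where "(i, j) \<in> M" using right by blast
      then show "j \<in> p ` {..<n}" using mem by auto
    qed (use mem M_edges in auto)
  qed
  then show "p permutes {..<n}" by (rule bij_imp_permutes) (simp add: p_def)
  show "M = perm_matching n p" using mem mem_perm_matching_iff by auto
qed

lemma card_perfect_matchings: "card {M. perfect_matching n M} = fact n"
proof -
  have "inj_on (perm_matching n) {p. p permutes {..<n}}"
  proof (rule inj_onI)
    fix p q assume p: "p \<in> {p. p permutes {..<n}}" and q: "q \<in> {p. p permutes {..<n}}"
      and eq: "perm_matching n p = perm_matching n q"
    have "p i = q i" if "i < n" for i
      using eq that mem_perm_matching_iff by blast
    moreover have "p i = q i" if "\<not> i < n" for i
      using p q that unfolding permutes_def by simp
    ultimately show "p = q" by blast
  qed
  moreover have "{M. perfect_matching n M} = perm_matching n ` {p. p permutes {..<n}}"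
    using perfect_matching_perm_matching perfect_matching_imp_perm_matching by blast
  ultimately show ?thesis by (simp add: card_image card_permutations)
qed

lemma finite_perfect_matchings: "finite {M. perfect_matching n M}"
  using card_perfect_matchings[of n] by (metis card.infinite fact_nonzero)

lemma card_perfect_matching: "perfect_matching n M \<Longrightarrow> card M = n"
  by (erule perfect_matching_imp_perm_matching) (simp add: perm_matching_def card_image inj_on_def)

lemma no_isolated_iff:
  assumes "F \<subseteq> Knn_edges n"
  shows "no_isolated n F \<longleftrightarrow>
           (\<forall>i<n. F \<inter> ({i} \<times> {..<n}) \<noteq> {}) \<and> (\<forall>j<n. F \<inter> ({..<n} \<times> {j}) \<noteq> {})"
  using assms unfolding no_isolated_def Knn_edges_def by blast

lemma perfect_matching_imp_no_isolated: "perfect_matching n M \<Longrightarrow> no_isolated n M"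
  unfolding perfect_matching_def no_isolated_def by blast

lemma perfect_matching_disjoint_stars:
  assumes "perfect_matching n M" "e \<in> M"
  shows "M \<inter> ({fst e} \<times> {..<n} - {e}) = {}" "M \<inter> ({..<n} \<times> {snd e} - {e}) = {}"
proof -
  obtain i j where e: "e = (i, j)" by fastforce
  have "i < n" "j < n" using assms e unfolding perfect_matching_def Knn_edges_def by auto
  then have "\<exists>!j. (i, j) \<in> M" "\<exists>!i. (i, j) \<in> M" using assms(1) unfolding perfect_matching_def by auto
  then show "M \<inter> ({fst e} \<times> {..<n} - {e}) = {}" "M \<inter> ({..<n} \<times> {snd e} - {e}) = {}"
    using assms(2) e by auto
qed

lemma stop_index_spec:
  assumes "n \<ge> 1" "xs \<in> permutations_of_set (Knn_edges n)"
  shows "0 < stop_index n xs" "stop_index n xs \<le> length xs" "no_isolated n (G_omega n xs)"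
    "\<not> no_isolated n (set (take (stop_index n xs - 1) xs))"
proof -
  have "set xs = Knn_edges n" using assms(2) by (rule permutations_of_setD)
  then have full: "no_isolated n (set (take (length xs) xs))"
    unfolding no_isolated_def Knn_edges_def by (auto intro!: exI[of _ 0])
  show "stop_index n xs \<le> length xs"
    unfolding stop_index_def by (rule Least_le) (rule full)
  show ok: "no_isolated n (G_omega n xs)"
    unfolding G_omega_def stop_index_def by (rule LeastI[of _ "length xs"]) (rule full)
  show "0 < stop_index n xs"
  proof (rule ccontr)
    assume "\<not> 0 < stop_index n xs"
    then have "no_isolated n {}" using ok unfolding G_omega_def by simp
    moreover have "0 < n" using assms(1) by simp
    ultimately show False unfolding no_isolated_def by blast
  qed
  then show "\<not> no_isolated n (set (take (stop_index n xs - 1) xs))"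
    unfolding stop_index_def by (intro not_less_Least) simp
qed

lemma ordered_blocks_imp_subset_G_omega:
  assumes n: "n \<ge> 1" and xs: "xs \<in> permutations_of_set (Knn_edges n)"
    and e: "e \<in> M" "M \<subseteq> Knn_edges n"
    and blocks: "ordered_blocks (M - {e}) e ({fst e} \<times> {..<n} - {e}) xs \<or>
                 ordered_blocks (M - {e}) e ({..<n} \<times> {snd e} - {e}) xs"
  shows "M \<subseteq> G_omega n xs"
proof -
  have "G_omega n xs \<subseteq> Knn_edges n"
    unfolding G_omega_def using permutations_of_setD(1)[OF xs] set_take_subset by metis
  then have cover: "\<forall>i<n. G_omega n xs \<inter> ({i} \<times> {..<n}) \<noteq> {}"
    "\<forall>j<n. G_omega n xs \<inter> ({..<n} \<times> {j}) \<noteq> {}"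
    using stop_index_spec(3)[OF n xs] by (simp_all add: no_isolated_iff)
  have covered: "M \<subseteq> G_omega n xs"
    if "e \<in> Z" "G_omega n xs \<inter> Z \<noteq> {}" "ordered_blocks (M - {e}) e (Z - {e}) xs" for Z
    using ordered_blocks_take[OF that(3), of "stop_index n xs"] that(1,2) e(1) unfolding G_omega_def
    by (simp add: insert_absorb)
  have "fst e < n" "snd e < n" using e unfolding Knn_edges_def by auto
  then show ?thesis
    using blocks covered[of "{fst e} \<times> {..<n}"] covered[of "{..<n} \<times> {snd e}"] cover
    by (cases e) auto
qed

lemma subset_G_omega_imp_ordered_blocks:
  assumes n: "n \<ge> 1" and xs: "xs \<in> permutations_of_set (Knn_edges n)"
    and M: "perfect_matching n M" and MG: "M \<subseteq> G_omega n xs"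
  shows "\<exists>e\<in>M. ordered_blocks (M - {e}) e ({fst e} \<times> {..<n} - {e}) xs \<or>
               ordered_blocks (M - {e}) e ({..<n} \<times> {snd e} - {e}) xs"
proof -
  define t where "t = stop_index n xs"
  define e where "e = xs ! (t - 1)"
  define T where "T = set (take (t - 1) xs)"
  note t_spec = stop_index_spec[OF n xs, folded t_def]
  have t: "t - 1 < length xs" using t_spec(1,2) by simp
  then have "take t xs = take (t - 1) xs @ [e]"
    using t_spec(1) take_Suc_conv_app_nth[OF t] unfolding e_def by simp
  then have M_T: "M \<subseteq> insert e T" using MG unfolding G_omega_def t_def[symmetric] T_def by auto
  \<comment> \<open>a vertex isolated in T is covered by e, and its star Z holds the edges that must come after e\<close>
  have blocks: "\<exists>e\<in>M \<inter> Z. ordered_blocks (M - {e}) e (Z - {e}) xs"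
    if "T \<inter> Z = {}" "M \<inter> Z \<noteq> {}" for Z
  proof -
    have "e \<in> M \<inter> Z" using that M_T by auto
    moreover have "ordered_blocks (M - {e}) e (Z - {e}) xs"
      using t M_T that(1) \<open>e \<in> M \<inter> Z\<close> unfolding e_def T_def
      by (intro ordered_blocks_nth) (auto simp: insert_absorb)
    ultimately show ?thesis ..
  qed
  have "T \<subseteq> Knn_edges n" unfolding T_def using permutations_of_setD(1)[OF xs] set_take_subset by metis
  then have "(\<exists>i<n. T \<inter> ({i} \<times> {..<n}) = {}) \<or> (\<exists>j<n. T \<inter> ({..<n} \<times> {j}) = {})"
    using t_spec(4) unfolding T_def[symmetric] no_isolated_iff[OF \<open>T \<subseteq> Knn_edges n\<close>] by blast
  moreover have "M \<subseteq> Knn_edges n" using M unfolding perfect_matching_def by blast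
  then have M_cover: "\<forall>i<n. M \<inter> ({i} \<times> {..<n}) \<noteq> {}" "\<forall>j<n. M \<inter> ({..<n} \<times> {j}) \<noteq> {}"
    using perfect_matching_imp_no_isolated[OF M] by (simp_all add: no_isolated_iff)
  ultimately show ?thesis
  proof (elim disjE exE conjE)
    fix i assume "i < n" "T \<inter> ({i} \<times> {..<n}) = {}"
    then obtain e where "e \<in> M \<inter> ({i} \<times> {..<n})" "ordered_blocks (M - {e}) e ({i} \<times> {..<n} - {e}) xs"
      using blocks[of "{i} \<times> {..<n}"] M_cover(1) by blast
    then show ?thesis by (intro bexI[of _ e]) auto
  next
    fix j assume "j < n" "T \<inter> ({..<n} \<times> {j}) = {}"
    then obtain e where "e \<in> M \<inter> ({..<n} \<times> {j})" "ordered_blocks (M - {e}) e ({..<n} \<times> {j} - {e}) xs"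
      using blocks[of "{..<n} \<times> {j}"] M_cover(2) by blast
    then show ?thesis by (intro bexI[of _ e]) auto
  qed
qed

lemma subset_G_omega_iff:
  assumes "n \<ge> 1" "xs \<in> permutations_of_set (Knn_edges n)" "perfect_matching n M"
  shows "M \<subseteq> G_omega n xs \<longleftrightarrow>
           (\<exists>e\<in>M. ordered_blocks (M - {e}) e ({fst e} \<times> {..<n} - {e}) xs \<or>
                  ordered_blocks (M - {e}) e ({..<n} \<times> {snd e} - {e}) xs)"
proof
  have "M \<subseteq> Knn_edges n" using assms(3) unfolding perfect_matching_def by blast
  then show "M \<subseteq> G_omega n xs" if "\<exists>e\<in>M. ordered_blocks (M - {e}) e ({fst e} \<times> {..<n} - {e}) xs \<or>
                  ordered_blocks (M - {e}) e ({..<n} \<times> {snd e} - {e}) xs"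
    using that ordered_blocks_imp_subset_G_omega[OF assms(1,2)] by blast
qed (rule subset_G_omega_imp_ordered_blocks[OF assms])

lemma card_ordered_blocks_matching:
  assumes M: "perfect_matching n M" and e: "e \<in> M" and X: "X \<subseteq> Knn_edges n" "M \<inter> X = {}"
  shows "real (card {xs \<in> permutations_of_set (Knn_edges n). ordered_blocks (M - {e}) e X xs})
           = fact (n * n) / (n * ((n + card X) choose n))"
proof -
  define c where "c = card {xs \<in> permutations_of_set (Knn_edges n). ordered_blocks (M - {e}) e X xs}"
  define C where "C = (n + card X) choose n"
  have M_edges: "M \<subseteq> Knn_edges n" using M unfolding perfect_matching_def by blast
  have card_M: "card M = n" using card_perfect_matching[OF M] .
  have fin: "finite M" "finite X" using M_edges X(1) by (auto intro: rev_finite_subset simp: Knn_edges_def)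
  then obtain m where m: "n = Suc m" using card_M e by (cases n) auto
  have "c * fact (card (M - {e}) + card X + 1)
          = fact (card (Knn_edges n)) * (fact (card (M - {e})) * fact (card X))"
    unfolding c_def using e X M_edges by (intro card_ordered_blocks) (auto simp: Knn_edges_def)
  moreover have "card (M - {e}) = m" "card (Knn_edges n) = n * n"
    using card_M fin e m by (simp_all add: Knn_edges_def)
  ultimately have c: "c * fact (n + card X) = fact (n * n) * (fact m * fact (card X))"
    using m by simp
  have fact_n: "fact n = n * fact m" using m by simp
  have "(c * (n * C)) * (fact m * fact (card X)) = c * (fact n * fact (card X) * C)"
    unfolding fact_n by (simp only: mult_ac)
  also have "\<dots> = c * fact (n + card X)"
    using binomial_fact_lemma[of n "n + card X"] unfolding C_def by simp
  also have "\<dots> = fact (n * n) * (fact m * fact (card X))" by (rule c)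
  finally have "c * (n * C) = fact (n * n)" by simp
  then have "real c * (real n * real C) = fact (n * n)" by (metis of_nat_fact of_nat_mult)
  moreover have "C > 0" "n > 0" using m unfolding C_def by simp_all
  ultimately show ?thesis unfolding c_def[symmetric] C_def[symmetric] by (simp add: field_simps)
qed

lemma card_edges_at_endpoints:
  assumes "e \<in> Knn_edges n"
  shows "card ({fst e} \<times> {..<n} - {e}) = n - 1" "card ({..<n} \<times> {snd e} - {e}) = n - 1"
    "card (({fst e} \<times> {..<n} - {e}) \<union> ({..<n} \<times> {snd e} - {e})) = 2 * n - 2"
proof -
  have e: "fst e < n" "snd e < n" using assms unfolding Knn_edges_def by auto
  then show row: "card ({fst e} \<times> {..<n} - {e}) = n - 1"
    and col: "card ({..<n} \<times> {snd e} - {e}) = n - 1"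
    by (simp_all add: card_cartesian_product mem_Times_iff)
  have "({fst e} \<times> {..<n} - {e}) \<inter> ({..<n} \<times> {snd e} - {e}) = {}" by auto
  then show "card (({fst e} \<times> {..<n} - {e}) \<union> ({..<n} \<times> {snd e} - {e})) = 2 * n - 2"
    using row col by (simp add: card_Un_disjoint)
qed

lemma card_edge_event:
  assumes M: "perfect_matching n M" and e: "e \<in> M"
  defines "event X \<equiv> {xs \<in> permutations_of_set (Knn_edges n). ordered_blocks (M - {e}) e X xs}"
  shows "real (card (event ({fst e} \<times> {..<n} - {e}) \<union> event ({..<n} \<times> {snd e} - {e})))
           = fact (n * n) * (2 / real ((2 * n - 1) choose n) - 1 / real ((3 * n - 2) choose n)) / n"
proof -
  define row col where "row = {fst e} \<times> {..<n} - {e}" and "col = {..<n} \<times> {snd e} - {e}"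
  have e_edge: "e \<in> Knn_edges n" using e M unfolding perfect_matching_def by blast
  then have n: "n \<ge> 1" unfolding Knn_edges_def by auto
  have edges: "row \<subseteq> Knn_edges n" "col \<subseteq> Knn_edges n"
    using e_edge unfolding row_def col_def Knn_edges_def by auto
  have disj: "M \<inter> row = {}" "M \<inter> (row \<union> col) = {}" "M \<inter> col = {}"
    using perfect_matching_disjoint_stars[OF M e] unfolding row_def col_def by auto
  have "n + (n - 1) = 2 * n - 1" "n + (2 * n - 2) = 3 * n - 2" using n by auto
  then have row_event: "real (card (event row)) = fact (n * n) / (n * ((2 * n - 1) choose n))"
    and col_event: "real (card (event col)) = fact (n * n) / (n * ((2 * n - 1) choose n))"
    and both_event: "real (card (event (row \<union> col))) = fact (n * n) / (n * ((3 * n - 2) choose n))"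
    using card_ordered_blocks_matching[OF M e edges(1) disj(1)]
      card_ordered_blocks_matching[OF M e edges(2) disj(3)]
      card_ordered_blocks_matching[OF M e Un_least[OF edges] disj(2)]
      card_edges_at_endpoints[OF e_edge, folded row_def col_def]
    unfolding event_def by simp_all
  have "event row \<inter> event col = event (row \<union> col)"
    unfolding event_def ordered_blocks_Un[symmetric] by blast
  moreover have fin: "finite (event X)" for X unfolding event_def by simp
  ultimately have "card (event row \<union> event col) + card (event (row \<union> col)) = card (event row) + card (event col)"
    using card_Un_Int[OF fin fin] by simp
  then have "real (card (event row \<union> event col))
               = real (card (event row)) + real (card (event col)) - real (card (event (row \<union> col)))"
    by (metis add_diff_cancel_right' of_nat_add)
  moreover have "real ((2 * n - 1) choose n) > 0" "real ((3 * n - 2) choose n) > 0" using n by simp_all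
  ultimately show ?thesis using n unfolding row_event col_event both_event
    by (simp add: field_simps flip: row_def col_def)
qed

lemma card_subset_G_omega:
  assumes n: "n \<ge> 1" and M: "perfect_matching n M"
  shows "real (card {xs \<in> permutations_of_set (Knn_edges n). M \<subseteq> G_omega n xs})
           = fact (n * n) * (2 / real ((2 * n - 1) choose n) - 1 / real ((3 * n - 2) choose n))"
proof -
  define event where "event e X = {xs \<in> permutations_of_set (Knn_edges n). ordered_blocks (M - {e}) e X xs}"
    for e X
  define U where "U e = event e ({fst e} \<times> {..<n} - {e}) \<union> event e ({..<n} \<times> {snd e} - {e})" for e
  have "M \<subseteq> Knn_edges n" using M unfolding perfect_matching_def by blast
  then have fin: "finite M" by (rule finite_subset) (simp add: Knn_edges_def)
  have fin_U: "finite (U e)" for e unfolding U_def event_def by simp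
  have "{xs \<in> permutations_of_set (Knn_edges n). M \<subseteq> G_omega n xs} = (\<Union>e\<in>M. U e)"
  proof (intro set_eqI)
    fix xs
    show "xs \<in> {xs \<in> permutations_of_set (Knn_edges n). M \<subseteq> G_omega n xs} \<longleftrightarrow> xs \<in> (\<Union>e\<in>M. U e)"
      using subset_G_omega_iff[OF n _ M, of xs] unfolding U_def event_def by auto
  qed
  moreover have "U e \<inter> U f = {}" if "e \<in> M" "f \<in> M" "e \<noteq> f" for e f
  proof -
    have last: "precedes {g} {h} xs" if "xs \<in> U h" "g \<in> M" "g \<noteq> h" for g h xs
    proof -
      obtain X where "ordered_blocks (M - {h}) h X xs" using \<open>xs \<in> U h\<close> unfolding U_def event_def by blast
      then show ?thesis by (rule ordered_blocks_imp_precedes) (use that in simp)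
    qed
    show ?thesis using last[of _ e f] last[of _ f e] precedes_asym[of f e] that by blast
  qed
  ultimately have "card {xs \<in> permutations_of_set (Knn_edges n). M \<subseteq> G_omega n xs} = (\<Sum>e\<in>M. card (U e))"
    using fin fin_U by (simp add: card_UN_disjoint)
  moreover have "real (card (U e))
                   = fact (n * n) * (2 / real ((2 * n - 1) choose n) - 1 / real ((3 * n - 2) choose n)) / n"
    if "e \<in> M" for e
    using card_edge_event[OF M that] unfolding U_def event_def .
  ultimately show ?thesis using card_perfect_matching[OF M] n by simp
qed

lemma sum_num_pm_eq_sum_card:
  assumes "finite P"
  shows "(\<Sum>x\<in>P. num_pm n (F x)) = (\<Sum>M\<in>{M. perfect_matching n M}. card {x \<in> P. M \<subseteq> F x})"
proof -
  have "(\<Sum>x\<in>P. num_pm n (F x)) = (\<Sum>x\<in>P. \<Sum>M\<in>{M. perfect_matching n M}. if M \<subseteq> F x then 1 else 0)"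
    unfolding num_pm_def using finite_perfect_matchings[of n] by (simp add: sum.If_cases Int_def conj_commute)
  also have "\<dots> = (\<Sum>M\<in>{M. perfect_matching n M}. \<Sum>x\<in>P. if M \<subseteq> F x then 1 else 0)"
    by (rule sum.swap)
  also have "\<dots> = (\<Sum>M\<in>{M. perfect_matching n M}. card {x \<in> P. M \<subseteq> F x})"
    using assms by (simp add: sum.If_cases Int_def)
  finally show ?thesis .
qed

theorem corollary1:
  fixes n :: nat
  assumes "n \<ge> 1"
  shows "measure_pmf.expectation (pmf_of_set (permutations_of_set (Knn_edges n)))
           (\<lambda>xs. real (num_pm n (G_omega n xs)))
         = fact n * (2 / real ((2 * n - 1) choose n) - 1 / real ((3 * n - 2) choose n))"
proof -
  define P where "P = permutations_of_set (Knn_edges n)"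
  define q :: real where "q = 2 / real ((2 * n - 1) choose n) - 1 / real ((3 * n - 2) choose n)"
  have fin: "finite (Knn_edges n)" "card (Knn_edges n) = n * n" by (simp_all add: Knn_edges_def)
  have "(\<Sum>xs\<in>P. real (num_pm n (G_omega n xs)))
          = (\<Sum>M\<in>{M. perfect_matching n M}. real (card {xs \<in> P. M \<subseteq> G_omega n xs}))"
    using sum_num_pm_eq_sum_card[of P n "G_omega n"] unfolding P_def by (simp flip: of_nat_sum)
  also have "\<dots> = fact n * (fact (n * n) * q)"
    using card_subset_G_omega[OF assms] card_perfect_matchings[of n] unfolding P_def q_def by simp
  finally show ?thesis
    using fin unfolding P_def[symmetric] q_def[symmetric]
    by (subst integral_pmf_of_set) (auto simp: P_def)
qed

end
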